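(* Let $G$ be a finite group, $\rho:G\to SO(n)$ a faithful real representation, and $L=F(G)$ the Fitting subgroup of $G$. Let $U=\mathbb{R}^n$ with $G$-action via $\rho$, $U^L$ the $L$-fixed subspace, $U_L$ its orthogonal complement, and $\rho_L: G\to O(\dim U_L)$ the subrepresentation on $U_L$. Let $K=\ker\rho_L$. Then the Fitting subgroup $F(K)$ of $K$ is trivial.
   Context: The Fitting subgroup $F(X)$ of a finite group $X$ is its unique largest nilpotent normal subgroup. *)

theory Defs
  imports "HOL-Analysis.Analysis" "HOL-Algebra.Algebra"
begin

primrec lower_central :: "('a, 'b) monoid_scheme \<Rightarrow> nat \<Rightarrow> 'a set" where
  "lower_central G 0 = carrier G"
| "lower_central G (Suc i) =
     generate G {x \<otimes>\<^bsub>G\<^esub> y \<otimes>\<^bsub>G\<^esub> inv\<^bsub>G\<^esub> x \<otimes>\<^bsub>G\<^esub> inv\<^bsub>G\<^esub> y | x y.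
                   x \<in> carrier G \<and> y \<in> lower_central G i}"

definition nilpotent_group :: "('a, 'b) monoid_scheme \<Rightarrow> bool" where
  "nilpotent_group G \<longleftrightarrow> group G \<and> (\<exists>i. lower_central G i = {\<one>\<^bsub>G\<^esub>})"

definition is_fitting_subgroup :: "('a, 'b) monoid_scheme \<Rightarrow> 'a set \<Rightarrow> bool" where
  "is_fitting_subgroup G L \<longleftrightarrow>
     L \<lhd> G \<and> nilpotent_group (G\<lparr>carrier := L\<rparr>) \<and>
     (\<forall>N. N \<lhd> G \<and> nilpotent_group (G\<lparr>carrier := N\<rparr>) \<longrightarrow> N \<subseteq> L)"

definition fitting_subgroup :: "('a, 'b) monoid_scheme \<Rightarrow> 'a set" where
  "fitting_subgroup G = (THE L. is_fitting_subgroup G L)"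

end

theory Submission
  imports Defs
begin

(* An element of K \<inter> F(G) fixes the F(G)-fixed space pointwise because it lies in F(G), and
   the orthogonal complement of that space pointwise because it lies in K; so it acts trivially
   and, rho being faithful, is the identity. K is normal in G, because the fixed space of the
   normal subgroup F(G) and its orthogonal complement are G-invariant. Finally F(K), being
   characteristic in K, is a nilpotent normal subgroup of G, so F(K) \<subseteq> K \<inter> F(G) = 1.

   That Fitting subgroups exist at all is Fitting's theorem: a product MN of normal nilpotent
   subgroups is nilpotent. Say an element has M-weight at least i if it lies in the (i-1)-st term
   of the lower central series of M (every element has M-weight at least 0), and similarly for N.
   Since [mn, s] = m [n, s] m\<inverse> [m, s], and commutation with an element of M raises the M-weight
   without lowering the N-weight, the k-th term of the lower central series of MN lies in the
   subgroup generated by elements whose two weights add up to k + 1. For k = a + b, where the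
   a-th and b-th terms for M and N are trivial, one of the weights is too large. *)

section \<open>Commutators\<close>

definition commutator :: "('a, 'b) monoid_scheme \<Rightarrow> 'a \<Rightarrow> 'a \<Rightarrow> 'a" where
  "commutator G x y = x \<otimes>\<^bsub>G\<^esub> y \<otimes>\<^bsub>G\<^esub> inv\<^bsub>G\<^esub> x \<otimes>\<^bsub>G\<^esub> inv\<^bsub>G\<^esub> y"

definition commutator_subgroup :: "('a, 'b) monoid_scheme \<Rightarrow> 'a set \<Rightarrow> 'a set \<Rightarrow> 'a set" where
  "commutator_subgroup G A B = generate G {commutator G x y | x y. x \<in> A \<and> y \<in> B}"

lemma (in group_hom) hom_commutator:
  "x \<in> carrier G \<Longrightarrow> y \<in> carrier G \<Longrightarrow> h (commutator G x y) = commutator H (h x) (h y)"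
  by (simp add: commutator_def)

context group
begin

lemma inv_mult_cancel_left [simp]:
  "x \<in> carrier G \<Longrightarrow> y \<in> carrier G \<Longrightarrow> inv x \<otimes> (x \<otimes> y) = y"
  by (simp flip: m_assoc)

lemma mult_inv_cancel_left [simp]:
  "x \<in> carrier G \<Longrightarrow> y \<in> carrier G \<Longrightarrow> x \<otimes> (inv x \<otimes> y) = y"
  by (simp flip: m_assoc)

lemma normal_mem_carrier: "N \<lhd> G \<Longrightarrow> x \<in> N \<Longrightarrow> x \<in> carrier G"
  by (rule subgroup.mem_carrier[OF normal_imp_subgroup])

lemma commutator_closed [simp]:
  "x \<in> carrier G \<Longrightarrow> y \<in> carrier G \<Longrightarrow> commutator G x y \<in> carrier G"
  by (simp add: commutator_def)

lemma commutator_one_right [simp]: "x \<in> carrier G \<Longrightarrow> commutator G x \<one> = \<one>"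
  by (simp add: commutator_def)

lemma commutator_mult_left:
  "\<lbrakk>m \<in> carrier G; n \<in> carrier G; y \<in> carrier G\<rbrakk> \<Longrightarrow>
    commutator G (m \<otimes> n) y = m \<otimes> commutator G n y \<otimes> inv m \<otimes> commutator G m y"
  by (simp add: commutator_def m_assoc inv_mult_group)

lemma commutator_mult_right:
  "\<lbrakk>x \<in> carrier G; a \<in> carrier G; b \<in> carrier G\<rbrakk> \<Longrightarrow>
    commutator G x (a \<otimes> b) = commutator G x a \<otimes> (a \<otimes> commutator G x b \<otimes> inv a)"
  by (simp add: commutator_def m_assoc inv_mult_group)

lemma commutator_inv_right:
  "\<lbrakk>x \<in> carrier G; a \<in> carrier G\<rbrakk> \<Longrightarrow>
    commutator G x (inv a) = inv a \<otimes> inv (commutator G x a) \<otimes> a"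
  by (simp add: commutator_def m_assoc inv_mult_group)

lemma conjugation_hom: "g \<in> carrier G \<Longrightarrow> group_hom G G (\<lambda>x. g \<otimes> x \<otimes> inv g)"
  unfolding group_hom_def group_hom_axioms_def using is_group
  by (auto intro!: homI simp: m_assoc)

lemma commutator_in_normal_left:
  assumes M: "M \<lhd> G" and x: "x \<in> M" and y: "y \<in> carrier G"
  shows "commutator G x y \<in> M"
proof -
  have "x \<in> carrier G" using M x by (rule normal_mem_carrier)
  moreover have "y \<otimes> inv x \<otimes> inv y \<in> M"
    using M x y by (simp add: normal.inv_op_closed2 normal_imp_subgroup subgroup.m_inv_closed)
  ultimately show ?thesis
    using M x y by (simp add: commutator_def m_assoc normal_imp_subgroup subgroup.m_closed)
qed

lemma commutator_in_normal_right:
  assumes N: "N \<lhd> G" and x: "x \<in> carrier G" and y: "y \<in> N"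
  shows "commutator G x y \<in> N"
  unfolding commutator_def
  using N x y by (simp add: normal.inv_op_closed2 normal_imp_subgroup subgroup.m_closed subgroup.m_inv_closed)

lemma commutator_generate_in_normal:
  assumes T: "T \<lhd> G" and x: "x \<in> carrier G" and S: "S \<subseteq> carrier G"
    and gens: "\<And>s. s \<in> S \<Longrightarrow> commutator G x s \<in> T"
    and q: "q \<in> generate G S"
  shows "commutator G x q \<in> T"
  using q
proof (induction rule: generate.induct)
  case one
  then show ?case using x T by (simp add: normal_imp_subgroup subgroup.one_closed)
next
  case (incl s)
  then show ?case by (rule gens)
next
  case (inv s)
  with S have "s \<in> carrier G" by blast
  moreover have "inv (commutator G x s) \<in> T"
    using gens[OF inv] T by (simp add: normal_imp_subgroup subgroup.m_inv_closed)
  ultimately show ?case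
    using T x by (simp add: commutator_inv_right normal.inv_op_closed1)
next
  case (eng a b)
  with S have "a \<in> carrier G" "b \<in> carrier G" by (auto dest: generate_in_carrier)
  with eng.IH T x show ?case
    by (simp add: commutator_mult_right normal.inv_op_closed2 normal_imp_subgroup subgroup.m_closed)
qed

lemma commutator_in_commutator_subgroup:
  "\<lbrakk>x \<in> A; y \<in> B\<rbrakk> \<Longrightarrow> commutator G x y \<in> commutator_subgroup G A B"
  unfolding commutator_subgroup_def by (blast intro: generate.incl)

lemma commutator_subgroup_le:
  assumes "subgroup T G" and "\<And>x y. \<lbrakk>x \<in> A; y \<in> B\<rbrakk> \<Longrightarrow> commutator G x y \<in> T"
  shows "commutator_subgroup G A B \<subseteq> T"
  unfolding commutator_subgroup_def by (rule generate_subgroup_incl) (use assms in auto)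

lemma commutator_subgroup_normal:
  assumes A: "A \<lhd> G" and B: "B \<lhd> G"
  shows "commutator_subgroup G A B \<lhd> G"
  unfolding commutator_subgroup_def
proof (rule normal_generateI)
  have "A \<subseteq> carrier G" "B \<subseteq> carrier G"
    using A B by (simp_all add: normal_imp_subgroup subgroup.subset)
  then show "{commutator G x y | x y. x \<in> A \<and> y \<in> B} \<subseteq> carrier G"
    by (blast intro: commutator_closed)
next
  fix c g assume "c \<in> {commutator G x y | x y. x \<in> A \<and> y \<in> B}" and g: "g \<in> carrier G"
  then obtain x y where x: "x \<in> A" and y: "y \<in> B" and c: "c = commutator G x y" by blast
  have "g \<otimes> c \<otimes> inv g = commutator G (g \<otimes> x \<otimes> inv g) (g \<otimes> y \<otimes> inv g)"
    unfolding c using group_hom.hom_commutator[OF conjugation_hom[OF g]]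
      normal_mem_carrier[OF A x] normal_mem_carrier[OF B y] by simp
  moreover have "g \<otimes> x \<otimes> inv g \<in> A" "g \<otimes> y \<otimes> inv g \<in> B"
    using x y A B g by (simp_all add: normal.inv_op_closed2)
  ultimately show "g \<otimes> c \<otimes> inv g \<in> {commutator G x y | x y. x \<in> A \<and> y \<in> B}"
    by blast
qed

section \<open>Lower central series of subgroups\<close>

lemma lower_central_subgroup: "subgroup (lower_central G i) G"
proof (induction i)
  case 0
  then show ?case by (simp add: subgroup_self)
next
  case (Suc i)
  then show ?case by (auto intro!: generate_is_subgroup dest: subgroup.mem_carrier)
qed

lemma lower_central_trivial_mono:
  assumes "lower_central G i = {\<one>}" and "i \<le> j"
  shows "lower_central G j = {\<one>}"
  using assms(2)
proof (induction j rule: dec_induct)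
  case base
  then show ?case by (rule assms(1))
next
  case (step j)
  then have "{x \<otimes> y \<otimes> inv x \<otimes> inv y | x y. x \<in> carrier G \<and> y \<in> lower_central G j} = {\<one>}"
    by force
  then show ?case by (simp add: generate_one)
qed

lemma subgroup_lower_central_of_subgroup:
  "subgroup H G \<Longrightarrow> subgroup (lower_central (G\<lparr>carrier := H\<rparr>) i) G"
  using group.lower_central_subgroup[OF subgroup_imp_group] incl_subgroup by blast

lemma lower_central_of_subgroup_subset:
  "subgroup H G \<Longrightarrow> lower_central (G\<lparr>carrier := H\<rparr>) i \<subseteq> H"
  using group.lower_central_subgroup[OF subgroup_imp_group] subgroup.subset by force

lemma lower_central_of_subgroup_Suc:
  assumes H: "subgroup H G"
  shows "lower_central (G\<lparr>carrier := H\<rparr>) (Suc i)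
           = commutator_subgroup G H (lower_central (G\<lparr>carrier := H\<rparr>) i)"
proof -
  let ?L = "lower_central (G\<lparr>carrier := H\<rparr>) i"
  have L: "?L \<subseteq> H" using H by (rule lower_central_of_subgroup_subset)
  have commutator_eq: "x \<otimes> y \<otimes> inv\<^bsub>G\<lparr>carrier := H\<rparr>\<^esub> x \<otimes> inv\<^bsub>G\<lparr>carrier := H\<rparr>\<^esub> y = commutator G x y"
    if "x \<in> H" "y \<in> ?L" for x y
    using that L m_inv_consistent[OF H] by (auto simp: commutator_def)
  have "{x \<otimes> y \<otimes> inv\<^bsub>G\<lparr>carrier := H\<rparr>\<^esub> x \<otimes> inv\<^bsub>G\<lparr>carrier := H\<rparr>\<^esub> y | x y. x \<in> H \<and> y \<in> ?L}
      = {commutator G x y | x y. x \<in> H \<and> y \<in> ?L}"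
    by (force simp: commutator_eq)
  moreover have "{commutator G x y | x y. x \<in> H \<and> y \<in> ?L} \<subseteq> H"
    using H L by (auto simp: commutator_def subgroup.m_closed subgroup.m_inv_closed)
  ultimately show ?thesis
    using H by (simp add: commutator_subgroup_def generate_consistent)
qed

lemma lower_central_of_normal:
  assumes M: "M \<lhd> G"
  shows "lower_central (G\<lparr>carrier := M\<rparr>) i \<lhd> G"
proof (induction i)
  case 0
  then show ?case using M by simp
next
  case (Suc i)
  then show ?case
    unfolding lower_central_of_subgroup_Suc[OF normal_imp_subgroup[OF M]]
    using M by (rule commutator_subgroup_normal[rotated])
qed

end

lemma (in group_hom) lower_central_of_subgroup_image:
  assumes K: "subgroup K G"
  shows "lower_central (H\<lparr>carrier := h ` K\<rparr>) i = h ` lower_central (G\<lparr>carrier := K\<rparr>) i"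
proof (induction i)
  case 0
  then show ?case by simp
next
  case (Suc i)
  let ?L = "lower_central (G\<lparr>carrier := K\<rparr>) i"
  let ?C = "{commutator G x y | x y. x \<in> K \<and> y \<in> ?L}"
  have Kc: "K \<subseteq> carrier G" and Lc: "?L \<subseteq> carrier G"
    using K G.lower_central_of_subgroup_subset[OF K] by (auto dest: subgroup.subset)
  have "{commutator H a b | a b. a \<in> h ` K \<and> b \<in> h ` ?L} = h ` ?C"
    using Kc Lc by (force simp: hom_commutator)
  moreover have "?C \<subseteq> carrier G" using Kc Lc by (blast intro: G.commutator_closed)
  ultimately have "commutator_subgroup H (h ` K) (h ` ?L) = h ` commutator_subgroup G K ?L"
    unfolding commutator_subgroup_def by (simp add: generate_img)
  then show ?case
    unfolding G.lower_central_of_subgroup_Suc[OF K]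
      H.lower_central_of_subgroup_Suc[OF subgroup_img_is_subgroup[OF K]] Suc .
qed

lemma (in group_hom) nilpotent_group_image:
  assumes K: "subgroup K G" and nilpotent: "nilpotent_group (G\<lparr>carrier := K\<rparr>)"
  shows "nilpotent_group (H\<lparr>carrier := h ` K\<rparr>)"
proof -
  obtain i where "lower_central (G\<lparr>carrier := K\<rparr>) i = {\<one>\<^bsub>G\<^esub>}"
    using nilpotent unfolding nilpotent_group_def by auto
  then have "lower_central (H\<lparr>carrier := h ` K\<rparr>) i = {\<one>\<^bsub>H\<^esub>}"
    using lower_central_of_subgroup_image[OF K] by simp
  then show ?thesis
    unfolding nilpotent_group_def
    using H.subgroup_imp_group[OF subgroup_img_is_subgroup[OF K]] by auto
qed

section \<open>Fitting's theorem\<close>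

(* Elements of M-weight at least i, in the sense of the header. *)
definition padded_lower_central :: "('a, 'b) monoid_scheme \<Rightarrow> 'a set \<Rightarrow> nat \<Rightarrow> 'a set" where
  "padded_lower_central G M i =
     (case i of 0 \<Rightarrow> carrier G | Suc j \<Rightarrow> lower_central (G\<lparr>carrier := M\<rparr>) j)"

(* Elements whose M-weight and N-weight add up to at least Suc k. *)
definition weight_layer :: "('a, 'b) monoid_scheme \<Rightarrow> 'a set \<Rightarrow> 'a set \<Rightarrow> nat \<Rightarrow> 'a set" where
  "weight_layer G M N k =
     (\<Union>i \<le> Suc k. padded_lower_central G M i \<inter> padded_lower_central G N (Suc k - i))"

definition mixed_lower_central :: "('a, 'b) monoid_scheme \<Rightarrow> 'a set \<Rightarrow> 'a set \<Rightarrow> nat \<Rightarrow> 'a set" where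
  "mixed_lower_central G M N k = generate G (weight_layer G M N k)"

context group
begin

lemma padded_lower_central_normal: "M \<lhd> G \<Longrightarrow> padded_lower_central G M i \<lhd> G"
  unfolding padded_lower_central_def
  by (cases i) (simp_all only: nat.case normal_self lower_central_of_normal)

lemma commutator_padded_lower_central:
  assumes M: "M \<lhd> G" and x: "x \<in> M" and y: "y \<in> padded_lower_central G M i"
  shows "commutator G x y \<in> padded_lower_central G M (Suc i)"
proof (cases i)
  case 0
  then show ?thesis
    using commutator_in_normal_left[OF M x] y by (simp add: padded_lower_central_def)
next
  case (Suc j)
  then have "y \<in> lower_central (G\<lparr>carrier := M\<rparr>) j"
    using y by (simp add: padded_lower_central_def)
  then show ?thesis
    using Suc commutator_in_commutator_subgroup[OF x]
    by (simp del: lower_central.simps(2)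
        add: padded_lower_central_def lower_central_of_subgroup_Suc[OF normal_imp_subgroup[OF M]])
qed

lemma padded_lower_central_trivial:
  assumes M: "M \<lhd> G" and trivial: "lower_central (G\<lparr>carrier := M\<rparr>) a = {\<one>}" and "a < i"
  shows "padded_lower_central G M i = {\<one>}"
proof -
  interpret M: group "G\<lparr>carrier := M\<rparr>"
    using M by (simp add: normal_imp_subgroup subgroup_imp_group)
  from \<open>a < i\<close> obtain j where "i = Suc j" "a \<le> j" by (cases i) auto
  then show ?thesis
    using M.lower_central_trivial_mono[of a j] trivial by (simp add: padded_lower_central_def)
qed

lemma weight_layer_subset_carrier: "M \<lhd> G \<Longrightarrow> weight_layer G M N k \<subseteq> carrier G"
  unfolding weight_layer_def using padded_lower_central_normal normal_mem_carrier by blast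

lemma mixed_lower_central_normal:
  assumes M: "M \<lhd> G" and N: "N \<lhd> G"
  shows "mixed_lower_central G M N k \<lhd> G"
  unfolding mixed_lower_central_def
proof (rule normal_generateI)
  show "weight_layer G M N k \<subseteq> carrier G"
    using M by (rule weight_layer_subset_carrier)
next
  fix y g assume "y \<in> weight_layer G M N k" and g: "g \<in> carrier G"
  then show "g \<otimes> y \<otimes> inv g \<in> weight_layer G M N k"
    using padded_lower_central_normal[OF M] padded_lower_central_normal[OF N]
    unfolding weight_layer_def by (blast intro: normal.inv_op_closed2)
qed

lemma weight_layer_subset_mixed_lower_central:
  "weight_layer G M N k \<subseteq> mixed_lower_central G M N k"
  unfolding mixed_lower_central_def by (blast intro: generate.incl)

lemma commutator_weight_layer:
  assumes M: "M \<lhd> G" and N: "N \<lhd> G" and m: "m \<in> M" and n: "n \<in> N"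
    and s: "s \<in> weight_layer G M N k"
  shows "commutator G (m \<otimes> n) s \<in> mixed_lower_central G M N (Suc k)"
proof -
  let ?A = "padded_lower_central G M" and ?B = "padded_lower_central G N"
  have mc: "m \<in> carrier G" and nc: "n \<in> carrier G" and sc: "s \<in> carrier G"
    using normal_mem_carrier M N m n s weight_layer_subset_carrier[OF M] by blast+
  obtain i where i: "i \<le> Suc k" "s \<in> ?A i" "s \<in> ?B (Suc k - i)"
    using s unfolding weight_layer_def by blast
  have "commutator G n s \<in> ?A i \<inter> ?B (Suc (Suc k) - i)"
    using commutator_in_normal_right[OF padded_lower_central_normal[OF M] nc i(2)]
      commutator_padded_lower_central[OF N n i(3)] Suc_diff_le[OF i(1)] by simp
  then have "commutator G n s \<in> weight_layer G M N (Suc k)"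
    using i(1) unfolding weight_layer_def by auto
  then have n_part: "m \<otimes> commutator G n s \<otimes> inv m \<in> mixed_lower_central G M N (Suc k)"
    using weight_layer_subset_mixed_lower_central
      normal.inv_op_closed2[OF mixed_lower_central_normal[OF M N] mc] by blast
  have "commutator G m s \<in> ?A (Suc i) \<inter> ?B (Suc (Suc k) - Suc i)"
    using commutator_padded_lower_central[OF M m i(2)]
      commutator_in_normal_right[OF padded_lower_central_normal[OF N] mc i(3)] by simp
  then have "commutator G m s \<in> weight_layer G M N (Suc k)"
    using i(1) unfolding weight_layer_def by blast
  then have m_part: "commutator G m s \<in> mixed_lower_central G M N (Suc k)"
    using weight_layer_subset_mixed_lower_central by blast
  show ?thesis
    using n_part m_part mixed_lower_central_normal[OF M N] mc nc sc
    by (simp add: commutator_mult_left normal_imp_subgroup subgroup.m_closed)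
qed

lemma commutator_mixed_lower_central:
  assumes M: "M \<lhd> G" and N: "N \<lhd> G" and x: "x \<in> M <#> N"
    and y: "y \<in> mixed_lower_central G M N k"
  shows "commutator G x y \<in> mixed_lower_central G M N (Suc k)"
proof -
  obtain m n where m: "m \<in> M" and n: "n \<in> N" and x_eq: "x = m \<otimes> n"
    using x unfolding set_mult_def by blast
  have "x \<in> carrier G"
    using normal_mem_carrier[OF M m] normal_mem_carrier[OF N n] x_eq by simp
  moreover have "y \<in> generate G (weight_layer G M N k)"
    using y unfolding mixed_lower_central_def .
  ultimately show ?thesis
    unfolding x_eq
    using commutator_generate_in_normal[OF mixed_lower_central_normal[OF M N]
        _ weight_layer_subset_carrier[OF M] commutator_weight_layer[OF M N m n]]
    by blast
qed

lemma lower_central_set_mult_subset: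
  assumes M: "M \<lhd> G" and N: "N \<lhd> G"
  shows "lower_central (G\<lparr>carrier := M <#> N\<rparr>) k \<subseteq> mixed_lower_central G M N k"
proof (induction k)
  case 0
  show ?case
  proof
    fix x assume "x \<in> lower_central (G\<lparr>carrier := M <#> N\<rparr>) 0"
    then obtain m n where m: "m \<in> M" and n: "n \<in> N" and x_eq: "x = m \<otimes> n"
      unfolding set_mult_def by auto
    have "m \<in> carrier G" "n \<in> carrier G"
      using normal_mem_carrier M N m n by blast+
    then have "m \<in> padded_lower_central G M 1 \<inter> padded_lower_central G N (Suc 0 - 1)"
      and "n \<in> padded_lower_central G M 0 \<inter> padded_lower_central G N (Suc 0 - 0)"
      using m n by (simp_all add: padded_lower_central_def)
    then have "m \<in> weight_layer G M N 0" and "n \<in> weight_layer G M N 0"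
      unfolding weight_layer_def by (intro UN_I[of 1] UN_I[of 0]; simp)+
    then have "m \<in> mixed_lower_central G M N 0" "n \<in> mixed_lower_central G M N 0"
      using weight_layer_subset_mixed_lower_central by blast+
    then show "x \<in> mixed_lower_central G M N 0"
      unfolding x_eq mixed_lower_central_def by (rule generate.eng)
  qed
next
  case (Suc k)
  have "subgroup (M <#> N) G"
    using M N by (simp add: normal_imp_subgroup normal_subgroup_set_mult_closed)
  then show ?case
    unfolding lower_central_of_subgroup_Suc[OF \<open>subgroup (M <#> N) G\<close>]
    using Suc commutator_mixed_lower_central[OF M N]
    by (intro commutator_subgroup_le[OF normal_imp_subgroup[OF mixed_lower_central_normal[OF M N]]])
      blast
qed

lemma mixed_lower_central_trivial:
  assumes M: "M \<lhd> G" and N: "N \<lhd> G"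
    and trivial_M: "lower_central (G\<lparr>carrier := M\<rparr>) a = {\<one>}"
    and trivial_N: "lower_central (G\<lparr>carrier := N\<rparr>) b = {\<one>}"
  shows "mixed_lower_central G M N (a + b) = {\<one>}"
proof -
  have "padded_lower_central G M i \<inter> padded_lower_central G N (Suc (a + b) - i) \<subseteq> {\<one>}" for i
  proof (cases "a < i")
    case True
    then show ?thesis using padded_lower_central_trivial[OF M trivial_M] by blast
  next
    case False
    then have "b < Suc (a + b) - i" by simp
    then show ?thesis using padded_lower_central_trivial[OF N trivial_N] by blast
  qed
  then have "mixed_lower_central G M N (a + b) \<subseteq> {\<one>}"
    unfolding mixed_lower_central_def weight_layer_def
    by (intro generate_subgroup_incl[OF _ triv_subgroup]) blast
  then show ?thesis
    unfolding mixed_lower_central_def by (blast intro: generate.one)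
qed

theorem nilpotent_group_set_mult:
  assumes M: "M \<lhd> G" and N: "N \<lhd> G"
    and nilpotent_M: "nilpotent_group (G\<lparr>carrier := M\<rparr>)"
    and nilpotent_N: "nilpotent_group (G\<lparr>carrier := N\<rparr>)"
  shows "nilpotent_group (G\<lparr>carrier := M <#> N\<rparr>)"
proof -
  obtain a b where "lower_central (G\<lparr>carrier := M\<rparr>) a = {\<one>}" "lower_central (G\<lparr>carrier := N\<rparr>) b = {\<one>}"
    using nilpotent_M nilpotent_N unfolding nilpotent_group_def by auto
  then have "lower_central (G\<lparr>carrier := M <#> N\<rparr>) (a + b) \<subseteq> {\<one>}"
    using lower_central_set_mult_subset[OF M N] mixed_lower_central_trivial[OF M N] by blast
  moreover have MN: "subgroup (M <#> N) G"
    using M N by (simp add: normal_imp_subgroup normal_subgroup_set_mult_closed)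
  ultimately have "lower_central (G\<lparr>carrier := M <#> N\<rparr>) (a + b) = {\<one>}"
    using subgroup.one_closed[OF subgroup_lower_central_of_subgroup[OF MN]] by blast
  then show ?thesis
    unfolding nilpotent_group_def using subgroup_imp_group[OF MN] by auto
qed

section \<open>The Fitting subgroup\<close>

lemma nilpotent_group_trivial: "nilpotent_group (G\<lparr>carrier := {\<one>}\<rparr>)"
  unfolding nilpotent_group_def
  using subgroup_imp_group[OF triv_subgroup] by (auto intro: exI[of _ 0])

lemma fitting_subgroup_eq: "is_fitting_subgroup G L \<Longrightarrow> fitting_subgroup G = L"
  unfolding fitting_subgroup_def
  by (rule the_equality) (auto simp: is_fitting_subgroup_def)

theorem is_fitting_subgroup_fitting_subgroup:
  assumes fin: "finite (carrier G)"
  shows "is_fitting_subgroup G (fitting_subgroup G)"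
proof -
  let ?F = "{N. N \<lhd> G \<and> nilpotent_group (G\<lparr>carrier := N\<rparr>)}"
  have "?F \<subseteq> Pow (carrier G)"
    by (auto dest: normal_mem_carrier)
  then have "finite ?F"
    using fin by (simp add: finite_subset)
  moreover have "{\<one>} \<in> ?F"
    using one_is_normal nilpotent_group_trivial by simp
  ultimately obtain L where L: "L \<in> ?F" and maximal: "\<And>N. N \<in> ?F \<Longrightarrow> L \<subseteq> N \<Longrightarrow> L = N"
    using finite_has_maximal[of ?F] by blast
  have "N \<subseteq> L" if N: "N \<in> ?F" for N
  proof -
    have "L <#> N \<in> ?F"
      using L N by (simp add: normal_subgroup_set_mult_closed nilpotent_group_set_mult)
    moreover have "second_isomorphism_grp L G N"
      using L N by (simp add: second_isomorphism_grp_def second_isomorphism_grp_axioms_def normal_imp_subgroup)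
    then have "L \<subseteq> L <#> N" "N \<subseteq> L <#> N"
      by (simp_all add: second_isomorphism_grp.H_contained_in_set_mult
          second_isomorphism_grp.S_contained_in_set_mult)
    ultimately show ?thesis
      using maximal by blast
  qed
  then have "is_fitting_subgroup G L"
    using L unfolding is_fitting_subgroup_def by blast
  then show ?thesis
    by (simp add: fitting_subgroup_eq)
qed

lemma normal_in_subgroup_iff:
  assumes K: "subgroup K G"
  shows "N \<lhd> G\<lparr>carrier := K\<rparr> \<longleftrightarrow>
           subgroup N G \<and> N \<subseteq> K \<and> (\<forall>k\<in>K. \<forall>n\<in>N. k \<otimes> n \<otimes> inv k \<in> N)"
proof -
  have "subgroup N (G\<lparr>carrier := K\<rparr>) \<longleftrightarrow> subgroup N G \<and> N \<subseteq> K"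
    using incl_subgroup[OF K] subgroup_incl[OF _ K] subgroup.subset[of N "G\<lparr>carrier := K\<rparr>"]
    by auto
  moreover have "N \<lhd> G\<lparr>carrier := K\<rparr> \<longleftrightarrow> subgroup N (G\<lparr>carrier := K\<rparr>) \<and>
      (\<forall>k\<in>K. \<forall>n\<in>N. k \<otimes> n \<otimes> inv\<^bsub>G\<lparr>carrier := K\<rparr>\<^esub> k \<in> N)"
    using group.normal_inv_iff[OF subgroup_imp_group[OF K]] by simp
  ultimately show ?thesis
    using m_inv_consistent[OF K] by auto
qed

lemma is_fitting_subgroup_of_subgroup:
  assumes fin: "finite (carrier G)" and K: "subgroup K G"
  shows "is_fitting_subgroup (G\<lparr>carrier := K\<rparr>) (fitting_subgroup (G\<lparr>carrier := K\<rparr>))"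
proof -
  have "finite K" using fin subgroup.subset[OF K] by (rule finite_subset[rotated])
  then show ?thesis
    using group.is_fitting_subgroup_fitting_subgroup[OF subgroup_imp_group[OF K]] by simp
qed

lemma conjugate_normal_in_normal:
  assumes K: "K \<lhd> G" and N: "N \<lhd> G\<lparr>carrier := K\<rparr>" and g: "g \<in> carrier G"
  shows "(\<lambda>x. g \<otimes> x \<otimes> inv g) ` N \<lhd> G\<lparr>carrier := K\<rparr>"
proof -
  let ?c = "\<lambda>x. g \<otimes> x \<otimes> inv g"
  interpret c: group_hom G G ?c by (rule conjugation_hom[OF g])
  have K_subgroup: "subgroup K G" using K by (rule normal_imp_subgroup)
  have N_subgroup: "subgroup N G" and N_K: "N \<subseteq> K"
    and N_normal: "\<And>k n. k \<in> K \<Longrightarrow> n \<in> N \<Longrightarrow> k \<otimes> n \<otimes> inv k \<in> N"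
    using N unfolding normal_in_subgroup_iff[OF K_subgroup] by auto
  show ?thesis
    unfolding normal_in_subgroup_iff[OF K_subgroup]
  proof (intro conjI ballI)
    show "subgroup (?c ` N) G" using N_subgroup by (rule c.subgroup_img_is_subgroup)
    show "?c ` N \<subseteq> K" using N_K K g by (auto intro: normal.inv_op_closed2)
    fix k n assume k: "k \<in> K" and "n \<in> ?c ` N"
    then obtain x where x: "x \<in> N" and n: "n = ?c x" by blast
    have kc: "k \<in> carrier G" and xc: "x \<in> carrier G"
      using normal_mem_carrier K k x N_K by blast+
    have "inv g \<otimes> k \<otimes> g \<in> K"
      using K g k by (rule normal.inv_op_closed1)
    then have "(inv g \<otimes> k \<otimes> g) \<otimes> x \<otimes> inv (inv g \<otimes> k \<otimes> g) \<in> N"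
      using N_normal x by blast
    moreover have "k \<otimes> n \<otimes> inv k = ?c ((inv g \<otimes> k \<otimes> g) \<otimes> x \<otimes> inv (inv g \<otimes> k \<otimes> g))"
      using g kc xc by (simp add: n m_assoc inv_mult_group)
    ultimately show "k \<otimes> n \<otimes> inv k \<in> ?c ` N" by blast
  qed
qed

lemma normal_fitting_subgroup_of_normal:
  assumes fin: "finite (carrier G)" and K: "K \<lhd> G"
  shows "fitting_subgroup (G\<lparr>carrier := K\<rparr>) \<lhd> G"
proof -
  let ?F = "fitting_subgroup (G\<lparr>carrier := K\<rparr>)"
  have K_subgroup: "subgroup K G" using K by (rule normal_imp_subgroup)
  have "is_fitting_subgroup (G\<lparr>carrier := K\<rparr>) ?F"
    using fin K_subgroup by (rule is_fitting_subgroup_of_subgroup)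
  then have F_normal: "?F \<lhd> G\<lparr>carrier := K\<rparr>" and F_nilpotent: "nilpotent_group (G\<lparr>carrier := ?F\<rparr>)"
    and F_maximal: "\<And>N. N \<lhd> G\<lparr>carrier := K\<rparr> \<Longrightarrow> nilpotent_group (G\<lparr>carrier := N\<rparr>) \<Longrightarrow> N \<subseteq> ?F"
    unfolding is_fitting_subgroup_def by auto
  have F_subgroup: "subgroup ?F G"
    using F_normal unfolding normal_in_subgroup_iff[OF K_subgroup] by blast
  show ?thesis
  proof (rule normal_invI[OF F_subgroup])
    fix g f assume g: "g \<in> carrier G" and f: "f \<in> ?F"
    interpret c: group_hom G G "\<lambda>x. g \<otimes> x \<otimes> inv g" by (rule conjugation_hom[OF g])
    have "(\<lambda>x. g \<otimes> x \<otimes> inv g) ` ?F \<subseteq> ?F"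
      using conjugate_normal_in_normal[OF K F_normal g] c.nilpotent_group_image[OF F_subgroup F_nilpotent]
      by (rule F_maximal)
    then show "g \<otimes> f \<otimes> inv g \<in> ?F" using f by blast
  qed
qed

lemma fitting_subgroup_of_normal_subset:
  assumes fin: "finite (carrier G)" and K: "K \<lhd> G"
  shows "fitting_subgroup (G\<lparr>carrier := K\<rparr>) \<subseteq> K \<inter> fitting_subgroup G"
proof -
  let ?F = "fitting_subgroup (G\<lparr>carrier := K\<rparr>)"
  have K_subgroup: "subgroup K G" using K by (rule normal_imp_subgroup)
  have "is_fitting_subgroup (G\<lparr>carrier := K\<rparr>) ?F"
    using fin K_subgroup by (rule is_fitting_subgroup_of_subgroup)
  then have "?F \<lhd> G\<lparr>carrier := K\<rparr>" and nilpotent: "nilpotent_group (G\<lparr>carrier := ?F\<rparr>)"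
    unfolding is_fitting_subgroup_def by auto
  then have "?F \<subseteq> K"
    unfolding normal_in_subgroup_iff[OF K_subgroup] by blast
  moreover have "?F \<subseteq> fitting_subgroup G"
    using is_fitting_subgroup_fitting_subgroup[OF fin] normal_fitting_subgroup_of_normal[OF fin K] nilpotent
    unfolding is_fitting_subgroup_def by blast
  ultimately show ?thesis by blast
qed

lemma fitting_subgroup_of_normal_trivial:
  assumes fin: "finite (carrier G)" and K: "K \<lhd> G"
    and trivial: "K \<inter> fitting_subgroup G \<subseteq> {\<one>}"
  shows "fitting_subgroup (G\<lparr>carrier := K\<rparr>) = {\<one>}"
proof -
  have "is_fitting_subgroup (G\<lparr>carrier := K\<rparr>) (fitting_subgroup (G\<lparr>carrier := K\<rparr>))"
    using fin normal_imp_subgroup[OF K] by (rule is_fitting_subgroup_of_subgroup)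
  then have "subgroup (fitting_subgroup (G\<lparr>carrier := K\<rparr>)) (G\<lparr>carrier := K\<rparr>)"
    unfolding is_fitting_subgroup_def by (blast dest: normal_imp_subgroup)
  then have "\<one> \<in> fitting_subgroup (G\<lparr>carrier := K\<rparr>)"
    using subgroup.one_closed by force
  then show ?thesis
    using fitting_subgroup_of_normal_subset[OF fin K] trivial by auto
qed

end

section \<open>Orthogonal representations\<close>

locale orthogonal_representation = group G
  for G :: "('g, 'b) monoid_scheme" (structure) and \<rho> :: "'g \<Rightarrow> real^'n^'n" +
  assumes rep_mult: "\<lbrakk>x \<in> carrier G; y \<in> carrier G\<rbrakk> \<Longrightarrow> \<rho> (x \<otimes> y) = \<rho> x ** \<rho> y"
    and rep_orthogonal: "x \<in> carrier G \<Longrightarrow> orthogonal_matrix (\<rho> x)"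
begin

definition fixed_space :: "'g set \<Rightarrow> (real^'n) set" where
  "fixed_space H = {v. \<forall>g\<in>H. \<rho> g *v v = v}"

definition pointwise_stabilizer :: "(real^'n) set \<Rightarrow> 'g set" where
  "pointwise_stabilizer U = {g \<in> carrier G. \<forall>u\<in>U. \<rho> g *v u = u}"

definition invariant_set :: "(real^'n) set \<Rightarrow> bool" where
  "invariant_set U \<longleftrightarrow> (\<forall>g\<in>carrier G. \<forall>u\<in>U. \<rho> g *v u \<in> U)"

lemma rep_action: "\<lbrakk>x \<in> carrier G; y \<in> carrier G\<rbrakk> \<Longrightarrow> \<rho> (x \<otimes> y) *v v = \<rho> x *v (\<rho> y *v v)"
  by (simp add: rep_mult matrix_vector_mul_assoc)

lemma rep_one: "\<rho> \<one> = mat 1"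
proof -
  have "\<rho> \<one> = transpose (\<rho> \<one>) ** \<rho> \<one> ** \<rho> \<one>"
    using rep_orthogonal[of \<one>] by (simp add: orthogonal_matrix_def)
  also have "\<dots> = transpose (\<rho> \<one>) ** \<rho> \<one>"
    using rep_mult[of \<one> \<one>] by (simp add: matrix_mul_assoc[symmetric])
  also have "\<dots> = mat 1"
    using rep_orthogonal[of \<one>] by (simp add: orthogonal_matrix_def)
  finally show ?thesis .
qed

lemma rep_inv:
  assumes g: "g \<in> carrier G"
  shows "\<rho> (inv g) = transpose (\<rho> g)"
proof -
  have left_inverse: "\<rho> (inv g) ** \<rho> g = mat 1"
    using g rep_mult[of "inv g" g] by (simp add: rep_one)
  have "\<rho> (inv g) = \<rho> (inv g) ** (\<rho> g ** transpose (\<rho> g))"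
    using rep_orthogonal[OF g] by (simp add: orthogonal_matrix_def)
  also have "\<dots> = transpose (\<rho> g)"
    by (simp add: matrix_mul_assoc left_inverse)
  finally show ?thesis .
qed

lemma subspace_fixed_space: "subspace (fixed_space H)"
  unfolding subspace_def fixed_space_def
  by (simp add: matrix_vector_right_distrib matrix_vector_mult_scaleR)

lemma fixed_space_invariant:
  assumes N: "N \<lhd> G"
  shows "invariant_set (fixed_space N)"
  unfolding invariant_set_def
proof (intro ballI)
  fix g v assume g: "g \<in> carrier G" and v: "v \<in> fixed_space N"
  have "\<rho> n *v (\<rho> g *v v) = \<rho> g *v v" if n: "n \<in> N" for n
  proof -
    have nc: "n \<in> carrier G" using N n by (rule normal_mem_carrier)
    have conj: "inv g \<otimes> n \<otimes> g \<in> N" using N g n by (rule normal.inv_op_closed1)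
    have "\<rho> n *v (\<rho> g *v v) = \<rho> (g \<otimes> (inv g \<otimes> n \<otimes> g)) *v v"
      using g nc by (simp add: rep_action[symmetric] m_assoc)
    also have "\<dots> = \<rho> g *v (\<rho> (inv g \<otimes> n \<otimes> g) *v v)"
      using g nc by (simp add: rep_action)
    also have "\<rho> (inv g \<otimes> n \<otimes> g) *v v = v"
      using conj v unfolding fixed_space_def by blast
    finally show ?thesis .
  qed
  then show "\<rho> g *v v \<in> fixed_space N"
    unfolding fixed_space_def by blast
qed

lemma orthogonal_comp_invariant:
  assumes U: "invariant_set U"
  shows "invariant_set (orthogonal_comp U)"
  unfolding invariant_set_def orthogonal_comp_def
proof (intro ballI CollectI)
  fix g u y assume g: "g \<in> carrier G" and u: "u \<in> {x. \<forall>y\<in>U. orthogonal y x}" and y: "y \<in> U"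
  have "y \<bullet> (\<rho> g *v u) = (\<rho> (inv g) *v y) \<bullet> u"
    using g by (simp add: dot_lmul_matrix rep_inv)
  moreover have "\<rho> (inv g) *v y \<in> U"
    using U g y unfolding invariant_set_def by simp
  ultimately show "orthogonal y (\<rho> g *v u)"
    using u unfolding orthogonal_def by simp
qed

lemma pointwise_stabilizer_normal:
  assumes U: "invariant_set U"
  shows "pointwise_stabilizer U \<lhd> G"
proof (rule normal_invI)
  show "subgroup (pointwise_stabilizer U) G"
  proof (rule subgroupI)
    show "pointwise_stabilizer U \<subseteq> carrier G" "pointwise_stabilizer U \<noteq> {}"
      unfolding pointwise_stabilizer_def using rep_one by auto
  next
    fix a assume a: "a \<in> pointwise_stabilizer U"
    have "\<rho> (inv a) *v u = u" if "u \<in> U" for u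
    proof -
      have "\<rho> (inv a) *v u = \<rho> (inv a) *v (\<rho> a *v u)"
        using a that unfolding pointwise_stabilizer_def by simp
      also have "\<dots> = u"
        using a unfolding pointwise_stabilizer_def by (simp flip: rep_action add: rep_one)
      finally show ?thesis .
    qed
    then show "inv a \<in> pointwise_stabilizer U"
      using a unfolding pointwise_stabilizer_def by simp
  next
    fix a b assume "a \<in> pointwise_stabilizer U" "b \<in> pointwise_stabilizer U"
    then show "a \<otimes> b \<in> pointwise_stabilizer U"
      unfolding pointwise_stabilizer_def by (simp add: rep_action)
  qed
next
  fix g k assume g: "g \<in> carrier G" and k: "k \<in> pointwise_stabilizer U"
  have "\<rho> (g \<otimes> k \<otimes> inv g) *v u = u" if u: "u \<in> U" for u
  proof -
    have "\<rho> (inv g) *v u \<in> U"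
      using U g u unfolding invariant_set_def by simp
    then have "\<rho> (g \<otimes> k \<otimes> inv g) *v u = \<rho> g *v (\<rho> (inv g) *v u)"
      using g k unfolding pointwise_stabilizer_def by (simp add: rep_action)
    also have "\<dots> = u"
      using g by (simp flip: rep_action add: rep_one)
    finally show ?thesis .
  qed
  then show "g \<otimes> k \<otimes> inv g \<in> pointwise_stabilizer U"
    using g k unfolding pointwise_stabilizer_def by simp
qed

lemma pointwise_stabilizer_orthogonal_comp_inter:
  assumes faithful: "inj_on \<rho> (carrier G)" and H: "H \<subseteq> carrier G"
  shows "pointwise_stabilizer (orthogonal_comp (fixed_space H)) \<inter> H \<subseteq> {\<one>}"
proof
  fix g assume g: "g \<in> pointwise_stabilizer (orthogonal_comp (fixed_space H)) \<inter> H"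
  have "\<rho> g *v v = mat 1 *v v" for v
  proof -
    have "v \<in> fixed_space H + orthogonal_comp (fixed_space H)"
      using subspace_sum_orthogonal_comp[OF subspace_fixed_space] by simp
    then obtain p q where "p \<in> fixed_space H" "q \<in> orthogonal_comp (fixed_space H)" "v = p + q"
      by (rule set_plus_elim)
    then show ?thesis
      using g unfolding fixed_space_def pointwise_stabilizer_def
      by (simp add: matrix_vector_right_distrib)
  qed
  then have "\<rho> g = \<rho> \<one>"
    by (simp add: rep_one matrix_eq)
  then show "g \<in> {\<one>}"
    using faithful g H by (auto dest: inj_onD)
qed

end

theorem proposition2p7:
  fixes G :: "('g, 'b) monoid_scheme"
    and \<rho> :: "'g \<Rightarrow> real^'n^'n"
  assumes "group G" and "finite (carrier G)"
    and hom: "\<forall>x \<in> carrier G. \<forall>y \<in> carrier G. \<rho> (x \<otimes>\<^bsub>G\<^esub> y) = \<rho> x ** \<rho> y"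
    and SO: "\<forall>x \<in> carrier G. orthogonal_matrix (\<rho> x) \<and> det (\<rho> x) = 1"
    and faithful: "inj_on \<rho> (carrier G)"
  defines "L \<equiv> fitting_subgroup G"
  defines "UL_fix \<equiv> {v :: real^'n. \<forall>g \<in> L. \<rho> g *v v = v}"
  defines "U_L \<equiv> orthogonal_comp UL_fix"
  defines "K \<equiv> {g \<in> carrier G. \<forall>u \<in> U_L. \<rho> g *v u = u}"
  shows "fitting_subgroup (G\<lparr>carrier := K\<rparr>) = {\<one>\<^bsub>G\<^esub>}"
proof -
  interpret orthogonal_representation G \<rho>
    using \<open>group G\<close> hom SO
    by (simp add: orthogonal_representation_def orthogonal_representation_axioms_def)
  have L_normal: "L \<lhd> G"
    using is_fitting_subgroup_fitting_subgroup[OF \<open>finite (carrier G)\<close>]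
    unfolding L_def is_fitting_subgroup_def by blast
  have K_eq: "K = pointwise_stabilizer (orthogonal_comp (fixed_space L))"
    unfolding K_def U_L_def UL_fix_def fixed_space_def pointwise_stabilizer_def ..
  have "K \<lhd> G"
    unfolding K_eq
    by (intro pointwise_stabilizer_normal orthogonal_comp_invariant fixed_space_invariant L_normal)
  moreover have "K \<inter> L \<subseteq> {\<one>\<^bsub>G\<^esub>}"
    unfolding K_eq using L_normal normal_mem_carrier
    by (intro pointwise_stabilizer_orthogonal_comp_inter faithful) blast
  ultimately show ?thesis
    using fitting_subgroup_of_normal_trivial \<open>finite (carrier G)\<close> unfolding L_def by blast
qed

end
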